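(* Let $k\ge2$ be the cache size and $N\ge k+1$. For the star access graph $S_N$ on $N$ vertices, \[-\frac12+\frac1{2(k-1)}\le\mathrm{Min}^{S_N}(\mathrm{FIFO},\mathrm{LRU})\le-\frac12+\frac1{2(k-1)}+\frac1{2k(k-1)}.\]
   Context: Paging: a cache holds at most $k$ pages and is initially empty. A request to a page in the cache is a hit; otherwise it is a fault, the page is brought into the cache, evicting a page first if the cache is full. $\mathcal{A}(I)$ is the number of faults of $\mathcal{A}$ on request sequence $I$. LRU evicts the least recently requested cached page; FIFO evicts the cached page that entered the cache earliest. The star $S_N$ has a central vertex adjacent to $N-1$ leaves, with no other edges. Access graph: a graph $G$ whose vertices are the pages; a request sequence respects $G$ if any two consecutive requests are identical or adjacent in $G$; $L(G)$ is the set of such sequences. $\mathrm{Min}_{\mathcal{A},\mathcal{B}}(n,G)=\min\{\mathcal{A}(I)-\mathcal{B}(I): I\in L(G),|I|=n\}$ and $\mathrm{Min}^G(\mathcal{A},\mathcal{B})=\liminf_{n\to\infty}\mathrm{Min}_{\mathcal{A},\mathcal{B}}(n,G)/n$. *)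

theory Defs
  imports "HOL-Analysis.Analysis"
begin

text \<open>For LRU the list is ordered by recency of request (most recent first); for FIFO it is
ordered by time of entry into the cache (newest first).\<close>

fun lru_faults :: "nat \<Rightarrow> 'a list \<Rightarrow> 'a list \<Rightarrow> nat" where
  "lru_faults k c [] = 0"
| "lru_faults k c (p # ps) =
     (if p \<in> set c then lru_faults k (p # removeAll p c) ps
      else Suc (lru_faults k (p # (if length c \<ge> k then butlast c else c)) ps))"

fun fifo_faults :: "nat \<Rightarrow> 'a list \<Rightarrow> 'a list \<Rightarrow> nat" where
  "fifo_faults k c [] = 0"
| "fifo_faults k c (p # ps) =
     (if p \<in> set c then fifo_faults k c ps
      else Suc (fifo_faults k (p # (if length c \<ge> k then butlast c else c)) ps))"

definition LRU :: "nat \<Rightarrow> 'a list \<Rightarrow> nat" where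
  "LRU k I = lru_faults k [] I"

definition FIFO :: "nat \<Rightarrow> 'a list \<Rightarrow> nat" where
  "FIFO k I = fifo_faults k [] I"

definition in_LG :: "'a set \<Rightarrow> ('a \<Rightarrow> 'a \<Rightarrow> bool) \<Rightarrow> 'a list \<Rightarrow> bool" where
  "in_LG V E I \<longleftrightarrow> set I \<subseteq> V \<and>
     (\<forall>i. Suc i < length I \<longrightarrow> I ! i = I ! (Suc i) \<or> E (I ! i) (I ! (Suc i)))"

definition star_V :: "nat \<Rightarrow> nat set" where
  "star_V N = {..<N}"

definition star_E :: "nat \<Rightarrow> nat \<Rightarrow> bool" where
  "star_E u v \<longleftrightarrow> (u = 0 \<and> v \<noteq> 0) \<or> (v = 0 \<and> u \<noteq> 0)"

definition Min_diff :: "('a list \<Rightarrow> nat) \<Rightarrow> ('a list \<Rightarrow> nat) \<Rightarrow> 'a set \<Rightarrow> ('a \<Rightarrow> 'a \<Rightarrow> bool)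
    \<Rightarrow> nat \<Rightarrow> int" where
  "Min_diff A B V E n = Min {int (A I) - int (B I) | I. in_LG V E I \<and> length I = n}"

definition Min_ratio :: "('a list \<Rightarrow> nat) \<Rightarrow> ('a list \<Rightarrow> nat) \<Rightarrow> 'a set \<Rightarrow> ('a \<Rightarrow> 'a \<Rightarrow> bool)
    \<Rightarrow> ereal" where
  "Min_ratio A B V E = liminf (\<lambda>n. ereal (real_of_int (Min_diff A B V E n) / real n))"

end

theory Submission
  imports Defs "HOL-Library.Sublist" "HOL-Real_Asymp.Real_Asymp"
begin

text \<open>On a walk in the star, once the centre has been requested it stays among the two most
recently used pages, so LRU faults essentially only on leaves requested right after the centre, that
is on at most half of the requests.  Between two FIFO faults all requested pages stay in FIFO's
cache, so LRU faults on at most \<open>k - 1\<close> of them.  Hence \<open>LRU \<le> n/2 + O(1)\<close> and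
\<open>LRU \<le> (k - 1) FIFO + O(1)\<close>, which gives the lower bound.  For the upper bound, after a warm-up
the adversary requests the leaves \<open>1, \<dots>, k\<close> cyclically, returning to the centre between any two
of them.  LRU then acts like LRU with \<open>k - 1\<close> slots on the \<open>k\<close> leaves and faults on every leaf,
while the FIFO cache rotates through the \<open>k + 1\<close> pages and faults \<open>k + 1\<close> times every \<open>k - 1\<close>
cycles of \<open>2 k\<close> requests.\<close>

definition lru_step :: "nat \<Rightarrow> 'a list \<Rightarrow> 'a \<Rightarrow> 'a list" where
  "lru_step k c p = (if p \<in> set c then p # removeAll p c
                     else p # (if length c \<ge> k then butlast c else c))"

definition fifo_step :: "nat \<Rightarrow> 'a list \<Rightarrow> 'a \<Rightarrow> 'a list" where
  "fifo_step k c p = (if p \<in> set c then c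
                      else p # (if length c \<ge> k then butlast c else c))"

lemma lru_faults_Cons:
  "lru_faults k c (p # ps) = (if p \<in> set c then 0 else 1) + lru_faults k (lru_step k c p) ps"
  by (simp add: lru_step_def)

lemma fifo_faults_Cons:
  "fifo_faults k c (p # ps) = (if p \<in> set c then 0 else 1) + fifo_faults k (fifo_step k c p) ps"
  by (simp add: fifo_step_def)

lemma hd_lru_step [simp]: "hd (lru_step k c p) = p"
  by (simp add: lru_step_def)

lemma set_lru_step: "set (lru_step k c p) \<subseteq> insert p (set c)"
  by (auto simp: lru_step_def dest: in_set_butlastD)

lemma distinct_lru_step: "distinct c \<Longrightarrow> distinct (lru_step k c p)"
  by (auto simp: lru_step_def distinct_removeAll distinct_butlast dest: in_set_butlastD)

lemma length_lru_step:
  "distinct c \<Longrightarrow> length c \<le> k \<Longrightarrow> 0 < k \<Longrightarrow> length (lru_step k c p) \<le> k"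
  by (auto simp: lru_step_def distinct_remove1_removeAll[symmetric] length_remove1)

lemma length_fifo_step: "length c \<le> k \<Longrightarrow> 0 < k \<Longrightarrow> length (fifo_step k c p) \<le> k"
  by (cases c) (auto simp: fifo_step_def)

lemma lru_faults_fresh:
  assumes "distinct xs" "set xs \<inter> set c = {}" "length c + length xs \<le> k"
  shows "lru_faults k c (xs @ r) = length xs + lru_faults k (rev xs @ c) r"
  using assms
proof (induction xs arbitrary: c)
  case Nil
  then show ?case by simp
next
  case (Cons x xs)
  then have "lru_faults k (x # c) (xs @ r) = length xs + lru_faults k (rev xs @ x # c) r"
    by (intro Cons.IH) auto
  then show ?case using Cons.prems by simp
qed

lemma lru_faults_cached:
  assumes "distinct xs" "set xs \<subseteq> set c"
  shows "lru_faults k c (xs @ r) = lru_faults k (rev xs @ filter (\<lambda>p. p \<notin> set xs) c) r"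
  using assms
proof (induction xs arbitrary: c)
  case Nil
  then show ?case by simp
next
  case (Cons x xs)
  have "filter (\<lambda>p. p \<notin> set xs) (x # removeAll x c) = x # filter (\<lambda>p. p \<notin> set (x # xs)) c"
    using Cons.prems(1) by (auto simp: removeAll_filter_not_eq intro!: filter_cong)
  moreover have "lru_faults k (x # removeAll x c) (xs @ r)
      = lru_faults k (rev xs @ filter (\<lambda>p. p \<notin> set xs) (x # removeAll x c)) r"
    using Cons.prems by (intro Cons.IH) auto
  ultimately show ?case using Cons.prems by simp
qed

lemma fifo_faults_cached:
  "set xs \<subseteq> set c \<Longrightarrow> fifo_faults k c (xs @ r) = fifo_faults k c r"
  by (induction xs) auto

lemma prefix_lru_step:
  assumes "prefix pre c" "p \<in> set pre \<or> length pre < k"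
  shows "prefix (p # removeAll p pre) (lru_step k c p)"
proof -
  obtain suf where c: "c = pre @ suf" using assms(1) by (auto simp: prefix_def)
  show ?thesis
  proof (cases "p \<in> set c")
    case True
    then show ?thesis using c by (simp add: lru_step_def)
  next
    case False
    then have "length pre < k" "removeAll p pre = pre" using assms(2) c by auto
    moreover have "suf \<noteq> []" if "length c \<ge> k" using that \<open>length pre < k\<close> c by auto
    ultimately show ?thesis using False c by (auto simp: lru_step_def butlast_append)
  qed
qed

fun walk :: "('a \<Rightarrow> 'a \<Rightarrow> bool) \<Rightarrow> 'a \<Rightarrow> 'a list \<Rightarrow> bool" where
  "walk E q [] \<longleftrightarrow> True"
| "walk E q (p # ps) \<longleftrightarrow> (q = p \<or> E q p) \<and> walk E p ps"

lemma in_LG_Cons_Cons: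
  "in_LG V E (p # q # qs) \<longleftrightarrow> p \<in> V \<and> (p = q \<or> E p q) \<and> in_LG V E (q # qs)"
proof -
  have split: "(\<forall>i. P i) \<longleftrightarrow> P 0 \<and> (\<forall>i. P (Suc i))" for P :: "nat \<Rightarrow> bool"
    by (metis not0_implies_Suc)
  show ?thesis
    unfolding in_LG_def by (subst split) auto
qed

lemma in_LG_Cons_iff: "in_LG V E (p # ps) \<longleftrightarrow> set (p # ps) \<subseteq> V \<and> walk E p ps"
proof (induction ps arbitrary: p)
  case Nil
  then show ?case by (simp add: in_LG_def)
next
  case (Cons q qs)
  then show ?case by (auto simp: in_LG_Cons_Cons)
qed

lemma finite_diffs_LG:
  assumes "finite V"
  shows "finite {int (A I) - int (B I) | I. in_LG V E I \<and> length I = n}"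
proof -
  have "{int (A I) - int (B I) | I. in_LG V E I \<and> length I = n}
      \<subseteq> (\<lambda>I. int (A I) - int (B I)) ` {I. set I \<subseteq> V \<and> length I = n}"
    unfolding in_LG_def by auto
  then show ?thesis
    using finite_lists_length_eq[OF assms] by (meson finite_imageI finite_subset)
qed

lemma Min_diff_le:
  assumes "finite V" "in_LG V E I"
  shows "Min_diff A B V E (length I) \<le> int (A I) - int (B I)"
  unfolding Min_diff_def using assms by (intro Min_le finite_diffs_LG) auto

lemma Min_diff_ge:
  assumes "finite V" "in_LG V E I"
    and "\<And>J. in_LG V E J \<Longrightarrow> length J = length I \<Longrightarrow> x \<le> real (A J) - real (B J)"
  shows "x \<le> real_of_int (Min_diff A B V E (length I))"
proof -
  let ?S = "{int (A J) - int (B J) | J. in_LG V E J \<and> length J = length I}"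
  have "Min ?S \<in> ?S"
    using assms(2) by (intro Min_in finite_diffs_LG assms(1)) auto
  then show ?thesis
    unfolding Min_diff_def using assms(3) by auto
qed

lemma Min_ratio_ge:
  assumes "finite V" and long: "\<And>n. \<exists>I. in_LG V E I \<and> length I = n"
    and bound: "\<And>I. in_LG V E I \<Longrightarrow> a * real (length I) - b \<le> real (A I) - real (B I)"
  shows "ereal a \<le> Min_ratio A B V E"
proof -
  have "a - b / real n \<le> real_of_int (Min_diff A B V E n) / real n" if "n > 0" for n
  proof -
    obtain I where I: "in_LG V E I" "length I = n" using long by blast
    have "a * real n - b \<le> real_of_int (Min_diff A B V E (length I))"
      by (rule Min_diff_ge[OF assms(1) I(1)]) (use bound I(2) in fastforce)
    then have "(a * real n - b) / real n \<le> real_of_int (Min_diff A B V E n) / real n"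
      using I(2) that by (simp add: divide_right_mono)
    then show ?thesis using that by (simp add: diff_divide_distrib)
  qed
  then have "liminf (\<lambda>n. ereal (a - b / real n)) \<le> Min_ratio A B V E"
    unfolding Min_ratio_def
    by (intro Liminf_mono) (auto simp: eventually_sequentially intro!: exI[of _ 1])
  moreover have "liminf (\<lambda>n. ereal (a - b / real n)) = ereal a"
    by (intro lim_imp_Liminf tendsto_ereal tendsto_eq_intros) auto
  ultimately show ?thesis by simp
qed

lemma affine_ratio_tendsto:
  fixes a b c d :: real
  assumes "d > 0" "c > 0"
  shows "(\<lambda>t. (a + b * real t) / (c + d * real t)) \<longlonglongrightarrow> b / d"
proof -
  have eq: "(a + b * real t) / (c + d * real t) = b / d + (a * d - b * c) / (d * (c + d * real t))"
    for t
  proof -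
    define D where "D = c + d * real t"
    have "D > 0" unfolding D_def using assms by (simp add: add_pos_nonneg)
    then have "b / d + (a * d - b * c) / (d * D) = (b * D + (a * d - b * c)) / (d * D)"
      using assms by (simp add: field_simps)
    also have "b * D + (a * d - b * c) = d * (a + b * real t)"
      unfolding D_def by (simp add: algebra_simps)
    finally show ?thesis unfolding D_def[symmetric] using assms by simp
  qed
  have "filterlim (\<lambda>t. d * (c + d * real t)) at_top sequentially"
    using assms by real_asymp
  then have "(\<lambda>t. (a * d - b * c) / (d * (c + d * real t))) \<longlonglongrightarrow> 0"
    by (intro tendsto_divide_0[OF tendsto_const] filterlim_at_top_imp_at_infinity)
  then have "(\<lambda>t. b / d + (a * d - b * c) / (d * (c + d * real t))) \<longlonglongrightarrow> b / d + 0"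
    by (intro tendsto_add tendsto_const)
  then show ?thesis unfolding eq by simp
qed

lemma Min_ratio_le:
  assumes "finite V" "d > 0" "c > 0"
    and "\<And>t. in_LG V E (I t)" "\<And>t. real (length (I t)) = c + d * real t"
    and "\<And>t. real (A (I t)) - real (B (I t)) \<le> a + b * real t"
  shows "Min_ratio A B V E \<le> ereal (b / d)"
proof -
  define f where "f n = ereal (real_of_int (Min_diff A B V E n) / real n)" for n
  define s where "s t = length (I t)" for t
  have "strict_mono s"
  proof (rule strict_monoI_Suc)
    fix t
    have "real (s t) < real (s (Suc t))" using assms(2,5) unfolding s_def by simp
    then show "s t < s (Suc t)" by simp
  qed
  then have "liminf f \<le> liminf (f \<circ> s)"
    by (rule liminf_subseq_mono)
  also have "\<dots> \<le> liminf (\<lambda>t. ereal ((a + b * real t) / (c + d * real t)))"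
  proof (intro Liminf_mono always_eventually allI)
    fix t
    have "real_of_int (Min_diff A B V E (s t)) \<le> a + b * real t"
      using Min_diff_le[OF assms(1,4), of A B t] assms(6)[of t] unfolding s_def by linarith
    moreover have "c + d * real t > 0" using assms(2,3) by (simp add: add_pos_nonneg)
    ultimately show "(f \<circ> s) t \<le> ereal ((a + b * real t) / (c + d * real t))"
      unfolding f_def comp_def s_def assms(5) by (simp add: divide_right_mono)
  qed
  also have "\<dots> = ereal (b / d)"
    using affine_ratio_tendsto[OF assms(2,3)] by (intro lim_imp_Liminf) auto
  finally show ?thesis unfolding Min_ratio_def f_def .
qed

section \<open>The lower bound\<close>

text \<open>Flag \<open>z\<close> records whether the centre has been requested.  From then on the centre stays
among the two most recently used pages (\<open>k \<ge> 2\<close>), so it never faults again.\<close>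

definition lru_star_inv :: "nat \<Rightarrow> nat list \<Rightarrow> bool \<Rightarrow> bool" where
  "lru_star_inv k c z \<longleftrightarrow> c \<noteq> [] \<and> distinct c \<and> length c \<le> k \<and> (z \<longrightarrow> 0 \<in> set (take 2 c))"

lemma lru_star_inv_step:
  assumes inv: "lru_star_inv k c z" and k: "2 \<le> k" and edge: "hd c = p \<or> star_E (hd c) p"
  shows "lru_star_inv k (lru_step k c p) (z \<or> p = 0)"
proof -
  obtain q c' where c: "c = q # c'" "distinct c" "length c \<le> k" and z: "z \<longrightarrow> 0 \<in> set (take 2 c)"
    using inv unfolding lru_star_inv_def by (cases c) auto
  have "0 \<in> set (take 2 (lru_step k c p))" if "z" "p \<noteq> 0"
  proof (cases "p = q")
    case True
    then have "lru_step k c p = c" using c by (simp add: lru_step_def)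
    then show ?thesis using z \<open>z\<close> by simp
  next
    case False
    then have "q = 0" using edge c \<open>p \<noteq> 0\<close> by (auto simp: star_E_def)
    moreover have "c' \<noteq> []" if "length c \<ge> k" using that c k by auto
    ultimately show ?thesis using c False by (auto simp: lru_step_def)
  qed
  moreover have "0 \<in> set (take 2 (lru_step k c 0))" "lru_step k c p \<noteq> []"
    by (simp_all add: lru_step_def)
  moreover have "distinct (lru_step k c p)" "length (lru_step k c p) \<le> k"
    using c k by (simp_all add: distinct_lru_step length_lru_step)
  ultimately show ?thesis
    unfolding lru_star_inv_def by auto
qed

text \<open>Apart from the first request of the centre, LRU faults only on a leaf requested right after
the centre; the summand for \<open>hd c = 0\<close> pays for such a leaf in advance.\<close>

lemma lru_faults_star_half:
  assumes "lru_star_inv k c z" "2 \<le> k" "walk star_E (hd c) ps"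
  shows "2 * lru_faults k c ps \<le> length ps + (if hd c = 0 then 1 else 0) + (if z then 0 else 2)"
  using assms
proof (induction ps arbitrary: c z)
  case Nil
  then show ?case by simp
next
  case (Cons p ps)
  have edge: "hd c = p \<or> star_E (hd c) p" and walk: "walk star_E p ps"
    using Cons.prems(3) by auto
  have c: "c \<noteq> []" "z \<longrightarrow> 0 \<in> set c"
    using Cons.prems(1) unfolding lru_star_inv_def by (auto dest: in_set_takeD)
  have "2 * lru_faults k (lru_step k c p) ps
          \<le> length ps + (if p = 0 then 1 else 0) + (if z \<or> p = 0 then 0 else 2)"
    using Cons.IH[OF lru_star_inv_step[OF Cons.prems(1,2) edge] Cons.prems(2)] walk by simp
  moreover have "p \<in> set c" if "hd c = p \<or> (p = 0 \<and> z)"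
    using that c by auto
  ultimately show ?case
    using edge unfolding lru_faults_Cons by (auto simp: star_E_def)
qed

text \<open>The prefix \<open>pre\<close> of the LRU cache holds the pages requested since the last FIFO fault.  They
all lie in the FIFO cache, so \<open>pre\<close> contains at most \<open>k - 1\<close> leaves, and every LRU fault on a
leaf without a FIFO fault enlarges it.  Without the centre, \<open>pre\<close> is a single leaf, since a walk
in the star passes through the centre between distinct leaves.\<close>

definition lru_fifo_inv :: "nat \<Rightarrow> nat list \<Rightarrow> nat list \<Rightarrow> nat list \<Rightarrow> bool \<Rightarrow> bool" where
  "lru_fifo_inv k c f pre z \<longleftrightarrow> lru_star_inv k c z \<and> length f \<le> k \<and> pre \<noteq> [] \<and> prefix pre c
     \<and> set pre \<subseteq> set f \<and> (0 \<notin> set pre \<longrightarrow> set pre \<subseteq> {hd c})"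

definition next_prefix :: "nat list \<Rightarrow> nat list \<Rightarrow> nat \<Rightarrow> nat list" where
  "next_prefix f pre p = (if p \<in> set f then p # removeAll p pre else [p])"

lemma card_leaves_prefix:
  assumes "lru_fifo_inv k c f pre z" "2 \<le> k"
  shows "card (set pre - {0}) \<le> k - 1"
proof (cases "0 \<in> set pre")
  case True
  have "card (set pre) \<le> card (set f)" using assms unfolding lru_fifo_inv_def by (simp add: card_mono)
  also have "\<dots> \<le> k" using assms card_length[of f] unfolding lru_fifo_inv_def by simp
  finally show ?thesis using True by (simp add: card_Diff_singleton)
next
  case False
  then have "card (set pre - {0}) \<le> card {hd c}"
    using assms unfolding lru_fifo_inv_def by (intro card_mono) auto
  then show ?thesis using assms(2) by simp
qed

lemma lru_fifo_inv_step:
  assumes inv: "lru_fifo_inv k c f pre z" and k: "2 \<le> k" and edge: "hd c = p \<or> star_E (hd c) p"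
  shows "lru_fifo_inv k (lru_step k c p) (fifo_step k f p) (next_prefix f pre p) (z \<or> p = 0)"
proof -
  have pre: "pre \<noteq> []" "prefix pre c" "set pre \<subseteq> set f" "0 \<notin> set pre \<longrightarrow> set pre \<subseteq> {hd c}"
    and c: "distinct c" and f: "length f \<le> k"
    using inv unfolding lru_fifo_inv_def lru_star_inv_def by auto
  have hd_pre: "hd c \<in> set pre"
    using pre(1,2) by (metis hd_append2 hd_in_set prefix_def)
  have "p \<in> set pre \<or> length pre < k" if "p \<in> set f"
  proof -
    have "distinct pre" using c pre(2) by (auto simp: prefix_def)
    then have "p \<notin> set pre \<Longrightarrow> Suc (length pre) \<le> card (set f)"
      using that pre(3) card_mono[of "set f" "insert p (set pre)"] by (simp add: distinct_card)
    then show ?thesis using card_length[of f] f by linarith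
  qed
  moreover have "prefix [p] (lru_step k c p)"
    by (simp add: lru_step_def)
  ultimately have "prefix (next_prefix f pre p) (lru_step k c p)"
    using prefix_lru_step[OF pre(2)] by (simp add: next_prefix_def)
  moreover have "set (next_prefix f pre p) \<subseteq> set (fifo_step k f p)"
    using pre(3) by (auto simp: next_prefix_def fifo_step_def)
  moreover have "set (next_prefix f pre p) \<subseteq> {p}" if "0 \<notin> set (next_prefix f pre p)"
  proof (cases "p \<in> set f \<and> hd c \<noteq> p")
    case True
    then have "0 \<notin> set pre" "p \<noteq> 0" using that by (auto simp: next_prefix_def)
    then show ?thesis using True edge pre(4) hd_pre by (auto simp: star_E_def)
  next
    case False
    then show ?thesis using pre(4) hd_pre that by (auto simp: next_prefix_def)
  qed
  ultimately show ?thesis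
    using lru_star_inv_step[OF _ k edge] length_fifo_step[OF f] inv k
    unfolding lru_fifo_inv_def by (auto simp: next_prefix_def)
qed

lemma card_leaves_next_prefix:
  "card (set (next_prefix f pre p) - {0})
     = (if p \<in> set f then card (set pre - {0}) else 0)
       + (if p = 0 \<or> (p \<in> set f \<and> p \<in> set pre) then 0 else 1)"
proof (cases "p \<in> set f")
  case True
  then have "set (next_prefix f pre p) - {0} = (if p = 0 then set pre - {0} else insert p (set pre - {0}))"
    by (auto simp: next_prefix_def)
  then show ?thesis using True by (simp add: insert_absorb)
next
  case False
  then show ?thesis by (simp add: next_prefix_def)
qed

lemma lru_faults_le_fifo_faults:
  assumes "lru_fifo_inv k c f pre z" "2 \<le> k" "walk star_E (hd c) ps"
  shows "lru_faults k c ps + card (set pre - {0})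
           \<le> (k - 1) * fifo_faults k f ps + (k - 1) + (if z then 0 else 1)"
  using assms
proof (induction ps arbitrary: c f pre z)
  case Nil
  then show ?case using card_leaves_prefix[OF Nil.prems(1,2)] by auto
next
  case (Cons p ps)
  have edge: "hd c = p \<or> star_E (hd c) p" and walk: "walk star_E p ps"
    using Cons.prems(3) by auto
  have "lru_faults k (lru_step k c p) ps + card (set (next_prefix f pre p) - {0})
          \<le> (k - 1) * fifo_faults k (fifo_step k f p) ps + (k - 1) + (if z \<or> p = 0 then 0 else 1)"
    using Cons.IH[OF lru_fifo_inv_step[OF Cons.prems(1,2) edge] Cons.prems(2)] walk by simp
  moreover have "(if p \<in> set c then 0 else 1) + card (set pre - {0}) + (if z \<or> p = 0 then 0 else 1)
      \<le> card (set (next_prefix f pre p) - {0}) + (k - 1) * (if p \<in> set f then 0 else 1)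
         + (if z then 0 else 1)"
  proof -
    have "p \<in> set c" if "p \<in> set pre \<or> (p = 0 \<and> z)"
      using that Cons.prems(1) unfolding lru_fifo_inv_def lru_star_inv_def
      by (auto simp: prefix_def dest: in_set_takeD)
    then show ?thesis
      using card_leaves_prefix[OF Cons.prems(1,2)] unfolding card_leaves_next_prefix by auto
  qed
  ultimately show ?case
    unfolding lru_faults_Cons fifo_faults_Cons distrib_left by linarith
qed

lemma LRU_bounds_star:
  assumes "in_LG (star_V N) star_E I" "2 \<le> k"
  shows "LRU k I \<le> (k - 1) * FIFO k I + 2 \<and> 2 * LRU k I \<le> length I + 4"
proof (cases I)
  case Nil
  then show ?thesis by (simp add: LRU_def FIFO_def)
next
  case (Cons p ps)
  have walk: "walk star_E (hd [p]) ps" using assms(1) Cons by (simp add: in_LG_Cons_iff)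
  have LRU: "LRU k I = 1 + lru_faults k [p] ps" and FIFO: "FIFO k I = 1 + fifo_faults k [p] ps"
    using Cons assms(2) by (simp_all add: LRU_def FIFO_def)
  have inv: "lru_star_inv k [p] (p = 0)"
    using assms(2) by (simp add: lru_star_inv_def)
  then have "lru_fifo_inv k [p] [p] [p] (p = 0)"
    using assms(2) by (simp add: lru_fifo_inv_def)
  from lru_faults_le_fifo_faults[OF this assms(2) walk]
  have "lru_faults k [p] ps \<le> (k - 1) * fifo_faults k [p] ps + (k - 1)"
    by (cases "p = 0") auto
  then have "LRU k I \<le> (k - 1) * FIFO k I + 2"
    unfolding LRU FIFO by (simp add: distrib_left)
  moreover from lru_faults_star_half[OF inv assms(2) walk]
  have "2 * LRU k I \<le> length I + 4"
    using LRU Cons by (cases "p = 0") auto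
  ultimately show ?thesis ..
qed

lemma FIFO_minus_LRU_star_lower:
  assumes "in_LG (star_V N) star_E I" "2 \<le> k"
  shows "(- 1/2 + 1 / (2 * (real k - 1))) * real (length I) - 2 \<le> real (FIFO k I) - real (LRU k I)"
proof -
  define m where "m = real k - 1"
  have m: "m \<ge> 1" using assms(2) unfolding m_def by simp
  have "real (LRU k I) \<le> real ((k - 1) * FIFO k I + 2)"
    using LRU_bounds_star[OF assms, THEN conjunct1] by (simp only: of_nat_le_iff)
  then have L_le_F: "real (LRU k I) \<le> m * real (FIFO k I) + 2"
    using assms(2) unfolding m_def by simp
  have L_le_half: "2 * real (LRU k I) \<le> real (length I) + 4"
    using LRU_bounds_star[OF assms, THEN conjunct2] by linarith
  have "(m - 1) * (2 * real (LRU k I)) \<le> (m - 1) * (real (length I) + 4)"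
    using L_le_half m by (intro mult_left_mono) auto
  then have "m * ((- 1/2 + 1 / (2 * m)) * real (length I) - 2) \<le> m * (real (FIFO k I) - real (LRU k I))"
    using L_le_F m by (simp add: algebra_simps)
  then show ?thesis
    using m unfolding m_def by (simp add: mult_le_cancel_left_pos)
qed

lemma Min_ratio_star_lower:
  assumes "2 \<le> k" "0 < N"
  shows "ereal (- 1/2 + 1 / (2 * (real k - 1))) \<le> Min_ratio (FIFO k) (LRU k) (star_V N) star_E"
proof (rule Min_ratio_ge)
  show "finite (star_V N)" by (simp add: star_V_def)
  show "\<exists>I. in_LG (star_V N) star_E I \<and> length I = n" for n
    using assms(2) by (intro exI[of _ "replicate n 0"]) (auto simp: in_LG_def star_V_def)
qed (rule FIFO_minus_LRU_star_lower[OF _ assms(1)])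

section \<open>The adversary\<close>

lemma butlast_rev_upt: "a < b \<Longrightarrow> butlast (rev [a..<b]) = rev [Suc a..<b]"
  by (simp add: upt_conv_Cons)

lemma upt_split_at: "i \<le> j \<Longrightarrow> j < k \<Longrightarrow> [i..<k] = [i..<j] @ j # [Suc j..<k]"
  using upt_add_eq_append[of i j "k - j"] by (simp add: upt_conv_Cons)

definition centre_tour :: "nat list \<Rightarrow> nat list" where
  "centre_tour xs = concat (map (\<lambda>a. [0, a]) xs)"

lemma centre_tour_simps [simp]:
  "centre_tour [] = []"
  "centre_tour (a # xs) = 0 # a # centre_tour xs"
  "centre_tour (xs @ ys) = centre_tour xs @ centre_tour ys"
  by (simp_all add: centre_tour_def)

lemma length_centre_tour [simp]: "length (centre_tour xs) = 2 * length xs"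
  by (induction xs) auto

lemma set_centre_tour: "set (centre_tour xs) \<subseteq> insert 0 (set xs)"
  by (induction xs) auto

lemma centre_tour_concat_replicate [simp]:
  "centre_tour (concat (replicate n xs)) = concat (replicate n (centre_tour xs))"
  by (induction n) auto

lemma centre_tour_snoc_centre: "centre_tour xs @ [0] = 0 # concat (map (\<lambda>a. [a, 0]) xs)"
  by (induction xs) auto

lemma walk_centre_tour: "0 \<notin> set (a # xs) \<Longrightarrow> walk star_E 0 (a # centre_tour xs)"
  by (induction xs arbitrary: a) (auto simp: star_E_def)

lemma in_LG_centre_tour:
  assumes "xs \<noteq> []" "set xs \<subseteq> {1..<N}"
  shows "in_LG (star_V N) star_E (centre_tour xs)"
proof -
  obtain a xs' where xs: "xs = a # xs'" using assms(1) by (cases xs) auto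
  have "0 < N" using assms(2) xs by auto
  then have "set (centre_tour xs) \<subseteq> star_V N"
    using set_centre_tour[of xs] assms(2) by (auto simp: star_V_def)
  moreover have "walk star_E 0 (a # centre_tour xs')"
    using assms(2) xs by (intro walk_centre_tour) auto
  ultimately show ?thesis
    using xs by (simp add: in_LG_Cons_iff)
qed

text \<open>On a centre tour the centre is always the second most recently used page, so LRU
behaves like LRU with one page less on the leaves alone.\<close>

fun with_centre :: "nat list \<Rightarrow> nat list" where
  "with_centre [] = [0]"
| "with_centre (a # D) = a # 0 # D"

lemma centre_in_with_centre [simp]: "0 \<in> set (with_centre D)"
  by (cases D) auto

lemma lru_faults_with_centre:
  assumes "2 \<le> k" "0 \<notin> set D" "0 \<notin> set xs"
  shows "lru_faults k (with_centre D) (centre_tour xs) = lru_faults (k - 1) D xs"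
  using assms(2,3)
proof (induction xs arbitrary: D)
  case Nil
  then show ?case by simp
next
  case (Cons a xs)
  have centre_hit: "lru_step k (with_centre D) 0 = 0 # D"
    using Cons.prems(1) by (cases D) (auto simp: lru_step_def)
  have "lru_step k (0 # D) a = with_centre (lru_step (k - 1) D a)"
    using Cons.prems assms(1) by (cases D) (auto simp: lru_step_def)
  moreover have "0 \<notin> set (lru_step (k - 1) D a)"
    using set_lru_step[of "k - 1" D a] Cons.prems by auto
  ultimately show ?case
    using Cons.IH[of "lru_step (k - 1) D a"] Cons.prems
    by (simp add: lru_faults_Cons centre_hit del: lru_faults.simps)
qed

lemma LRU_centre_tour:
  assumes "2 \<le> k" "xs \<noteq> []" "0 \<notin> set xs"
  shows "LRU k (centre_tour xs) = Suc (LRU (k - 1) xs)"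
proof -
  obtain a xs' where xs: "xs = a # xs'" using assms(2) by (cases xs) auto
  have "LRU k (centre_tour xs) = Suc (lru_faults k (with_centre []) (centre_tour xs))"
    using xs assms(1) by (simp add: LRU_def)
  then show ?thesis
    using lru_faults_with_centre[OF assms(1) _ assms(3), of "[]"] by (simp add: LRU_def)
qed

text \<open>While the leaves \<open>1, \<dots>, k\<close> are requested cyclically, the LRU cache of size \<open>k - 1\<close>
always misses exactly the page requested next.\<close>

definition lru_rot :: "nat \<Rightarrow> nat \<Rightarrow> nat list" where
  "lru_rot k j = rev [1..<j] @ rev [Suc j..<Suc k]"

lemma lru_step_lru_rot:
  assumes "1 \<le> j" "j \<le> k"
  shows "lru_step (k - 1) (lru_rot k j) j = j # butlast (lru_rot k j)"
proof -
  have "length (lru_rot k j) = k - 1" "j \<notin> set (lru_rot k j)"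
    using assms by (auto simp: lru_rot_def)
  then show ?thesis by (simp add: lru_step_def)
qed

lemma lru_faults_cycle:
  assumes "2 \<le> k" "1 \<le> j" "j \<le> k"
  shows "lru_faults (k - 1) (lru_rot k j) ([j..<Suc k] @ r)
           = Suc k - j + lru_faults (k - 1) (lru_rot k 1) r"
  using assms(3,2)
proof (induction j rule: inc_induct)
  case base
  have "k # butlast (lru_rot k k) = lru_rot k 1"
    using assms(1) by (simp add: lru_rot_def butlast_rev_upt numeral_2_eq_2)
  then show ?case
    using lru_step_lru_rot[of k k] assms(1)
    by (simp add: lru_faults_Cons lru_rot_def del: lru_faults.simps)
next
  case (step j)
  have "j # butlast (lru_rot k j) = lru_rot k (Suc j)"
    using step.hyps step.prems by (simp add: lru_rot_def butlast_append butlast_rev_upt)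
  moreover have "j \<notin> set (lru_rot k j)" "[j..<Suc k] = j # [Suc j..<Suc k]"
    using step.hyps by (simp_all add: lru_rot_def upt_conv_Cons)
  ultimately show ?case
    using step.IH step.hyps step.prems lru_step_lru_rot[of j k]
    by (simp add: lru_faults_Cons del: lru_faults.simps upt_Suc)
qed

lemma lru_faults_cycles:
  assumes "2 \<le> k"
  shows "lru_faults (k - 1) (lru_rot k 1) (concat (replicate n [1..<Suc k])) = n * k"
  using lru_faults_cycle[OF assms, of 1] assms by (induction n) auto

text \<open>The
warm-up \<open>k, \<dots>, 2, 2, \<dots>, k\<close> leaves LRU in the state \<open>lru_rot k 1\<close> and FIFO with every page
but leaf \<open>1\<close> cached, newest first in increasing order; then \<open>t (k - 1)\<close> cycles through the
leaves \<open>1, \<dots>, k\<close> follow.\<close>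

definition leaf_schedule :: "nat \<Rightarrow> nat \<Rightarrow> nat list" where
  "leaf_schedule k t = rev [2..<Suc k] @ [2..<Suc k] @ concat (replicate (t * (k - 1)) [1..<Suc k])"

lemma LRU_leaf_schedule:
  assumes "2 \<le> k"
  shows "LRU (k - 1) (leaf_schedule k t) = (k - 1) + t * (k - 1) * k"
proof -
  let ?cycles = "concat (replicate (t * (k - 1)) [1..<Suc k])"
  have "LRU (k - 1) (leaf_schedule k t)
      = (k - 1) + lru_faults (k - 1) [2..<Suc k] ([2..<Suc k] @ ?cycles)"
    unfolding LRU_def leaf_schedule_def by (subst lru_faults_fresh) auto
  also have "lru_faults (k - 1) [2..<Suc k] ([2..<Suc k] @ ?cycles)
      = lru_faults (k - 1) (lru_rot k 1) ?cycles"
    by (subst lru_faults_cached) (auto simp: lru_rot_def numeral_2_eq_2)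
  also have "\<dots> = t * (k - 1) * k"
    by (rule lru_faults_cycles[OF assms])
  finally show ?thesis .
qed

lemma fifo_faults_fresh_tour:
  assumes "0 \<in> set c" "distinct xs" "0 \<notin> set xs" "set xs \<inter> set c = {}"
    "length c + length xs \<le> k"
  shows "fifo_faults k c (centre_tour xs @ r) = length xs + fifo_faults k (rev xs @ c) r"
  using assms
proof (induction xs arbitrary: c)
  case Nil
  then show ?case by simp
next
  case (Cons x xs)
  then have "fifo_faults k (x # c) (centre_tour xs @ r) = length xs + fifo_faults k (rev xs @ x # c) r"
    by (intro Cons.IH) auto
  then show ?case using Cons.prems by simp
qed

text \<open>A full FIFO cache on the pages \<open>0, \<dots>, k\<close> that misses \<open>m\<close>, newest page first.  A fault
on \<open>m\<close> evicts \<open>m - 1\<close> (cyclically), so the missing page runs down through \<open>0, \<dots>, k\<close>.\<close>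

definition fifo_rot :: "nat \<Rightarrow> nat \<Rightarrow> nat list" where
  "fifo_rot k m = [Suc m..<Suc k] @ [0..<m]"

definition cyclic_pred :: "nat \<Rightarrow> nat \<Rightarrow> nat" where
  "cyclic_pred k m = (if m = 0 then k else m - 1)"

lemma set_fifo_rot: "m \<le> k \<Longrightarrow> set (fifo_rot k m) = {..k} - {m}"
  by (auto simp: fifo_rot_def)

lemma fifo_step_fifo_rot:
  assumes "1 \<le> k" "m \<le> k"
  shows "fifo_step k (fifo_rot k m) m = fifo_rot k (cyclic_pred k m)"
proof -
  have "butlast (fifo_rot k m) = [Suc m..<Suc k] @ [0..<m - 1]" if "m \<noteq> 0"
    using that by (cases m) (simp_all add: fifo_rot_def butlast_append)
  moreover have "m # [Suc m..<Suc k] = [m..<Suc k]"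
    using assms(2) by (simp add: upt_conv_Cons)
  moreover have "0 # butlast [1..<Suc k] = [0..<k]"
    using assms(1) by (cases k) (simp_all add: upt_conv_Cons)
  ultimately show ?thesis
    using assms by (auto simp: fifo_step_def fifo_rot_def cyclic_pred_def)
qed

lemma fifo_faults_fifo_rot:
  assumes "1 \<le> k" "m \<le> k" "set xs \<subseteq> {..k}" "m \<notin> set xs"
  shows "fifo_faults k (fifo_rot k m) (xs @ m # r) = Suc (fifo_faults k (fifo_rot k (cyclic_pred k m)) r)"
proof -
  have "fifo_faults k (fifo_rot k m) (xs @ m # r) = fifo_faults k (fifo_rot k m) (m # r)"
    using assms(2-4) by (intro fifo_faults_cached) (auto simp: set_fifo_rot)
  also have "\<dots> = Suc (fifo_faults k (fifo_rot k (cyclic_pred k m)) r)"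
    using assms(2) fifo_step_fifo_rot[OF assms(1,2)]
    by (simp add: fifo_faults_Cons set_fifo_rot del: fifo_faults.simps)
  finally show ?thesis .
qed

definition cycle_tour :: "nat \<Rightarrow> nat list" where
  "cycle_tour k = centre_tour [1..<Suc k]"

lemma fifo_faults_cycle_tour:
  assumes "2 \<le> j" "j \<le> k"
  shows "fifo_faults k (fifo_rot k j) (cycle_tour k @ r) = Suc (fifo_faults k (fifo_rot k (j - 1)) r)"
proof -
  define pre where "pre = centre_tour [1..<j] @ [0]"
  define post where "post = centre_tour [Suc j..<Suc k]"
  have "[1..<Suc k] = [1..<j] @ j # [Suc j..<Suc k]"
    using assms by (intro upt_split_at) auto
  then have "cycle_tour k @ r = pre @ j # post @ r"
    unfolding cycle_tour_def pre_def post_def by simp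
  moreover have "set pre \<subseteq> {..k}" "j \<notin> set pre"
    using set_centre_tour[of "[1..<j]"] assms unfolding pre_def by auto
  moreover have "set post \<subseteq> set (fifo_rot k (j - 1))"
    using set_centre_tour[of "[Suc j..<Suc k]"] assms unfolding post_def by (auto simp: set_fifo_rot)
  ultimately show ?thesis
    using assms fifo_faults_fifo_rot[of k j pre "post @ r"]
    by (simp add: cyclic_pred_def fifo_faults_cached)
qed

text \<open>From the rotation missing \<open>1\<close>, a cycle causes three faults: on \<open>1\<close>, then on the centre, then
on \<open>k\<close>.\<close>

lemma fifo_faults_cycle_tour_from_1:
  assumes "2 \<le> k"
  shows "fifo_faults k (fifo_rot k 1) (cycle_tour k @ r) = 3 + fifo_faults k (fifo_rot k (k - 1)) r"
proof -
  define zs where "zs = concat (map (\<lambda>a. [a, 0]) [2..<k])"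
  have "[1..<Suc k] = 1 # [2..<k] @ [k]"
    using assms upt_split_at[of 1 1 "Suc k"] upt_Suc_append[of 2 k] by (simp add: numeral_2_eq_2)
  then have "cycle_tour k @ r = [0] @ 1 # [] @ 0 # zs @ k # r"
    using centre_tour_snoc_centre[of "[2..<k]"] unfolding zs_def cycle_tour_def by simp
  also have "fifo_faults k (fifo_rot k 1) \<dots> = Suc (fifo_faults k (fifo_rot k 0) ([] @ 0 # zs @ k # r))"
    using assms by (subst fifo_faults_fifo_rot) (auto simp: cyclic_pred_def)
  also have "\<dots> = Suc (Suc (fifo_faults k (fifo_rot k k) (zs @ k # r)))"
    using assms by (subst fifo_faults_fifo_rot) (auto simp: cyclic_pred_def)
  also have "\<dots> = 3 + fifo_faults k (fifo_rot k (k - 1)) r"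
    using assms by (subst fifo_faults_fifo_rot) (auto simp: cyclic_pred_def zs_def)
  finally show ?thesis .
qed

lemma fifo_faults_cycle_tours_down:
  assumes "1 \<le> j" "j \<le> k"
  shows "fifo_faults k (fifo_rot k j) (concat (replicate (j - 1) (cycle_tour k)) @ r)
           = (j - 1) + fifo_faults k (fifo_rot k 1) r"
  using assms
proof (induction j)
  case 0
  then show ?case by simp
next
  case (Suc j)
  show ?case
  proof (cases "j = 0")
    case False
    then have "replicate j (cycle_tour k) = cycle_tour k # replicate (j - 1) (cycle_tour k)"
      by (cases j) auto
    then show ?thesis
      using Suc False fifo_faults_cycle_tour[of "Suc j" k] by simp
  qed simp
qed

lemma fifo_faults_cycle_tour_blocks:
  assumes "2 \<le> k"
  shows "fifo_faults k (fifo_rot k 1) (concat (replicate (n * (k - 1)) (cycle_tour k))) = n * (k + 1)"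
proof (induction n)
  case 0
  then show ?case by simp
next
  case (Suc n)
  have "Suc n * (k - 1) = Suc (k - 1 - 1) + n * (k - 1)"
    using assms by simp
  then have "concat (replicate (Suc n * (k - 1)) (cycle_tour k))
      = cycle_tour k @ concat (replicate (k - 1 - 1) (cycle_tour k))
          @ concat (replicate (n * (k - 1)) (cycle_tour k))"
    by (simp only: replicate_add replicate_Suc concat.simps concat_append append_assoc)
  then show ?case
    using Suc.IH assms fifo_faults_cycle_tour_from_1 fifo_faults_cycle_tours_down[of "k - 1" k]
    by simp
qed

lemma FIFO_centre_tour:
  "1 \<le> k \<Longrightarrow> xs \<noteq> [] \<Longrightarrow> FIFO k (centre_tour xs @ r) = Suc (fifo_faults k [0] (centre_tour xs @ r))"
  by (cases xs) (auto simp: FIFO_def)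

lemma FIFO_leaf_schedule:
  assumes "2 \<le> k"
  shows "FIFO k (centre_tour (leaf_schedule k t)) = k + t * (k + 1)"
proof -
  define blocks where "blocks = concat (replicate (t * (k - 1)) (cycle_tour k))"
  have "FIFO k (centre_tour (leaf_schedule k t))
      = Suc (fifo_faults k [0] (centre_tour (rev [2..<Suc k]) @ centre_tour [2..<Suc k] @ blocks))"
    using assms FIFO_centre_tour[of k "rev [2..<Suc k]"]
    by (simp add: leaf_schedule_def blocks_def cycle_tour_def del: upt_Suc)
  also have "\<dots> = k + fifo_faults k ([2..<Suc k] @ [0]) (centre_tour [2..<Suc k] @ blocks)"
    using assms by (subst fifo_faults_fresh_tour) auto
  also have "[2..<Suc k] @ [0] = fifo_rot k 1"
    by (simp add: fifo_rot_def numeral_2_eq_2)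
  also have "fifo_faults k (fifo_rot k 1) (centre_tour [2..<Suc k] @ blocks) = t * (k + 1)"
    using set_centre_tour[of "[2..<Suc k]"] fifo_faults_cycle_tour_blocks[OF assms]
    unfolding blocks_def by (subst fifo_faults_cached) (auto simp: set_fifo_rot)
  finally show ?thesis by simp
qed

lemma FIFO_minus_LRU_leaf_schedule:
  assumes "2 \<le> k"
  shows "real (FIFO k (centre_tour (leaf_schedule k t))) - real (LRU k (centre_tour (leaf_schedule k t)))
           = (real k + 1 - real k * (real k - 1)) * real t"
proof -
  have "leaf_schedule k t \<noteq> []" "0 \<notin> set (leaf_schedule k t)"
    using assms by (auto simp: leaf_schedule_def)
  then have "LRU k (centre_tour (leaf_schedule k t)) = k + t * (k - 1) * k"
    using assms LRU_centre_tour LRU_leaf_schedule by simp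
  moreover obtain m where "k = m + 2"
    using assms by (metis add.commute le_Suc_ex)
  ultimately show ?thesis
    using FIFO_leaf_schedule[OF assms] by (simp add: algebra_simps)
qed

lemma length_leaf_schedule:
  assumes "2 \<le> k"
  shows "real (length (centre_tour (leaf_schedule k t)))
           = 4 * (real k - 1) + 2 * real k * (real k - 1) * real t"
proof -
  have "length (leaf_schedule k t) = 2 * (k - 1) + t * (k - 1) * k"
    using assms by (simp add: leaf_schedule_def length_concat sum_list_replicate)
  moreover obtain m where "k = m + 2"
    using assms by (metis add.commute le_Suc_ex)
  ultimately show ?thesis
    by (simp add: algebra_simps)
qed

lemma Min_ratio_star_upper:
  assumes "2 \<le> k" "k + 1 \<le> N"
  shows "Min_ratio (FIFO k) (LRU k) (star_V N) star_E
           \<le> ereal (- 1/2 + 1 / (2 * (real k - 1)) + 1 / (2 * real k * (real k - 1)))"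
proof -
  have "Min_ratio (FIFO k) (LRU k) (star_V N) star_E
      \<le> ereal ((real k + 1 - real k * (real k - 1)) / (2 * real k * (real k - 1)))"
  proof (rule Min_ratio_le)
    show "finite (star_V N)" by (simp add: star_V_def)
    show "2 * real k * (real k - 1) > 0" "4 * (real k - 1) > 0"
      using assms(1) by auto
    show "in_LG (star_V N) star_E (centre_tour (leaf_schedule k t))" for t
      using assms by (intro in_LG_centre_tour) (auto simp: leaf_schedule_def)
    show "real (length (centre_tour (leaf_schedule k t)))
        = 4 * (real k - 1) + 2 * real k * (real k - 1) * real t" for t
      by (rule length_leaf_schedule[OF assms(1)])
    show "real (FIFO k (centre_tour (leaf_schedule k t))) - real (LRU k (centre_tour (leaf_schedule k t)))
        \<le> 0 + (real k + 1 - real k * (real k - 1)) * real t" for t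
      using FIFO_minus_LRU_leaf_schedule[OF assms(1)] by simp
  qed
  moreover have "(K + 1 - K * (K - 1)) / (2 * K * (K - 1))
      = - 1/2 + 1 / (2 * (K - 1)) + 1 / (2 * K * (K - 1))" if "K \<noteq> 0" "K - 1 \<noteq> 0" for K :: real
    using that by (simp add: divide_simps) (simp add: algebra_simps)
  ultimately show ?thesis
    using assms(1) by simp
qed

theorem lemma8:
  fixes k N :: nat
  assumes "k \<ge> 2" and "N \<ge> k + 1"
  shows "ereal (- 1/2 + 1 / (2 * (real k - 1)))
           \<le> Min_ratio (FIFO k) (LRU k) (star_V N) star_E
       \<and> Min_ratio (FIFO k) (LRU k) (star_V N) star_E
           \<le> ereal (- 1/2 + 1 / (2 * (real k - 1)) + 1 / (2 * real k * (real k - 1)))"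
  using Min_ratio_star_lower[of k N] Min_ratio_star_upper[of k N] assms by simp

end
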